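(* Suppose a deterministic algorithm $A$, given $n$ elements, guarantees that after $m$ comparisons it can list $r$ elements, each of which is guaranteed to be $k$-greater than at least $q$ elements. Then $m = \Omega\left(\max\{q^{1+1/(2^k-1)},\, q\cdot r^{1/2^{k-1}}\}\right)$, with an absolute implied constant.
   Context: Model of imprecise comparisons: there are $n$ elements, each with a fixed unknown real value; we identify an element with its value. Asked to compare $x_i$ and $x_j$, the comparator answers either "$x_i \ge x_j$" or "$x_j \ge x_i$". If $|x_i-x_j|>1$ the answer is correct; if $|x_i-x_j|\le 1$ the answer is arbitrary (possibly adversarial and adaptive). An element $x$ is $k$-greater than $y$ if $x \ge y - k$. "Guaranteed" means the property holds for every assignment of values and every comparator behaviour consistent with the answers received. *)

theory Defs
  imports Complex_Main
begin

text \<open>Deterministic comparison algorithms as decision trees. Elements are indices 0..<n.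
  A node Query i j yes no asks the comparator about x_i and x_j; the answer
  "x_i \<ge> x_j" leads to yes, the answer "x_j \<ge> x_i" leads to no.
  A leaf outputs a list of elements.\<close>

datatype alg = Leaf "nat list" | Query nat nat alg alg

text \<open>Number of comparisons in the worst case (longest path).\<close>
fun depth :: "alg \<Rightarrow> nat" where
  "depth (Leaf L) = 0"
| "depth (Query i j a b) = Suc (max (depth a) (depth b))"

definition answer_ok :: "(nat \<Rightarrow> real) \<Rightarrow> nat \<Rightarrow> nat \<Rightarrow> bool" where
  "answer_ok x i j \<longleftrightarrow> (\<bar>x i - x j\<bar> \<le> 1 \<or> x i \<ge> x j)"

text \<open>outputs x A L: some (possibly adversarial, adaptive) comparator behaviour
  consistent with the values x makes A output L.\<close>
inductive outputs :: "(nat \<Rightarrow> real) \<Rightarrow> alg \<Rightarrow> nat list \<Rightarrow> bool" where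
  leaf: "outputs x (Leaf L) L"
| yes: "answer_ok x i j \<Longrightarrow> outputs x a L \<Longrightarrow> outputs x (Query i j a b) L"
| no: "answer_ok x j i \<Longrightarrow> outputs x b L \<Longrightarrow> outputs x (Query i j a b) L"

definition k_greater :: "nat \<Rightarrow> real \<Rightarrow> real \<Rightarrow> bool" where
  "k_greater k u v \<longleftrightarrow> u \<ge> v - real k"

definition guarantees :: "nat \<Rightarrow> alg \<Rightarrow> nat \<Rightarrow> nat \<Rightarrow> nat \<Rightarrow> bool" where
  "guarantees n A r q k \<longleftrightarrow>
     (\<forall>x L. outputs x A L \<longrightarrow>
        length L = r \<and> distinct L \<and> set L \<subseteq> {..<n} \<and>
        (\<forall>e\<in>set L. card {y \<in> {..<n}. y \<noteq> e \<and> k_greater k (x e) (x y)} \<ge> q))"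

end

theory Submission
  imports Defs
begin

text \<open>The adversary answers every new comparison in favour of the element of currently
  smaller out-degree and records the answers as a directed graph \<open>E\<close> with at most \<open>m\<close> edges,
  an edge \<open>(i, j)\<close> meaning "\<open>x\<^sub>i \<ge> x\<^sub>j\<close>". Every assignment that increases by at most 1 along
  each edge is consistent with all answers. Taking for \<open>x\<close> the (truncated) graph distance
  from an output \<open>e\<close> shows that the radius-\<open>k\<close> out-ball of \<open>e\<close> must contain \<open>q\<close> other elements.

  The out-degree rule ensures that no vertex has more than \<open>t\<close> successors of out-degree
  below \<open>t\<close>. Splitting successors at the threshold \<open>l \<approx> 2|E|/P\<close> shows that an out-ball of
  size \<open>P\<close> at radius \<open>j + 1\<close> forces size \<open>P\<^sup>2/(16|E|)\<close> at radius \<open>j\<close>. Iterating from radius \<open>k\<close>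
  down to radius 0 gives the first bound; stopping at radius 1, where the ball size is
  bounded by the out-degree, and summing over the \<open>r\<close> outputs gives the second.\<close>

section \<open>The adversary\<close>

definition outdeg :: "(nat \<times> nat) set \<Rightarrow> nat \<Rightarrow> nat" where
  "outdeg E a = card (E `` {a})"

fun adversary_run :: "(nat \<times> nat) set \<Rightarrow> alg \<Rightarrow> nat list \<times> (nat \<times> nat) set" where
  "adversary_run E (Leaf L) = (L, E)"
| "adversary_run E (Query i j a b) =
     (if i = j \<or> (i, j) \<in> E then adversary_run E a
      else if (j, i) \<in> E then adversary_run E b
      else if outdeg E i \<le> outdeg E j then adversary_run (insert (i, j) E) a
      else adversary_run (insert (j, i) E) b)"

definition edge_consistent :: "(nat \<times> nat) set \<Rightarrow> (nat \<Rightarrow> real) \<Rightarrow> bool" where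
  "edge_consistent E x \<longleftrightarrow> (\<forall>(i, j)\<in>E. x j \<le> x i + 1)"

definition low_successors_bounded :: "(nat \<times> nat) set \<Rightarrow> bool" where
  "low_successors_bounded E \<longleftrightarrow> (\<forall>a t. card {b \<in> E `` {a}. outdeg E b < t} \<le> t)"

lemma adversary_run_mono: "E \<subseteq> snd (adversary_run E A)"
  by (induction E A rule: adversary_run.induct) auto

lemma adversary_run_card:
  "finite E \<Longrightarrow> finite (snd (adversary_run E A)) \<and> card (snd (adversary_run E A)) \<le> card E + depth A"
  by (induction E A rule: adversary_run.induct) (fastforce simp: card_insert_if)+

lemma edge_consistent_answer_ok: "edge_consistent E x \<Longrightarrow> (i, j) \<in> E \<Longrightarrow> answer_ok x i j"
  unfolding edge_consistent_def answer_ok_def by auto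

lemma outputs_adversary_run:
  "edge_consistent (snd (adversary_run E A)) x \<Longrightarrow> outputs x A (fst (adversary_run E A))"
proof (induction E A rule: adversary_run.induct)
  case (1 E L)
  then show ?case by (simp add: outputs.leaf)
next
  case (2 E i j a b)
  have ok: "answer_ok x u v" if "(u, v) \<in> E'" and "edge_consistent (snd (adversary_run E' c)) x"
    for u v E' c
    using that adversary_run_mono by (blast intro: edge_consistent_answer_ok)
  have refl: "answer_ok x i i" by (simp add: answer_ok_def)
  consider (old_ij) "i = j \<or> (i, j) \<in> E" | (old_ji) "i \<noteq> j" "(i, j) \<notin> E" "(j, i) \<in> E"
    | (new_ij) "i \<noteq> j" "(i, j) \<notin> E" "(j, i) \<notin> E" "outdeg E i \<le> outdeg E j"
    | (new_ji) "i \<noteq> j" "(i, j) \<notin> E" "(j, i) \<notin> E" "\<not> outdeg E i \<le> outdeg E j"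
    by blast
  then show ?case
  proof cases
    case old_ij
    then show ?thesis using 2(1,5) ok[of i j E a] refl by (auto intro: outputs.yes)
  next
    case old_ji
    then show ?thesis using 2(2,5) ok[of j i E b] by (auto intro: outputs.no)
  next
    case new_ij
    then show ?thesis using 2(3,5) ok[of i j "insert (i, j) E" a] by (auto intro: outputs.yes)
  next
    case new_ji
    then show ?thesis using 2(4,5) ok[of j i "insert (j, i) E" b] by (auto intro: outputs.no)
  qed
qed

lemma outdeg_insert:
  assumes "finite E" "(i, j) \<notin> E"
  shows "outdeg (insert (i, j) E) b = outdeg E b + (if b = i then 1 else 0)"
proof -
  have "insert (i, j) E `` {b} = (if b = i then insert j (E `` {b}) else E `` {b})"
    by auto
  then show ?thesis using assms by (simp add: outdeg_def card_insert_if)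
qed

lemma low_successors_bounded_insert:
  assumes fin: "finite E" and bounded: "low_successors_bounded E"
    and new: "(i, j) \<notin> E" "i \<noteq> j" and le: "outdeg E i \<le> outdeg E j"
  shows "low_successors_bounded (insert (i, j) E)"
  unfolding low_successors_bounded_def
proof (intro allI)
  fix a t
  let ?E' = "insert (i, j) E"
  let ?low = "{b \<in> E `` {a}. outdeg E b < t}"
  have outdeg_le: "outdeg E b \<le> outdeg ?E' b" for b
    using outdeg_insert[OF fin new(1)] by simp
  have outdeg_j: "outdeg ?E' j = outdeg E j"
    using outdeg_insert[OF fin new(1)] new(2) by simp
  have low_fin: "finite ?low" using fin by (auto intro: finite_subset[of _ "E `` {a}"])
  have low_le: "card ?low \<le> t" using bounded unfolding low_successors_bounded_def by blast
  show "card {b \<in> ?E' `` {a}. outdeg ?E' b < t} \<le> t"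
  proof (cases "a = i \<and> outdeg E j < t")
    case True
    \<comment> \<open>\<open>j\<close> is the only new low successor, and \<open>i\<close> has at most \<open>outdeg E j < t\<close> old ones.\<close>
    have "card {b \<in> ?E' `` {a}. outdeg ?E' b < t} \<le> card (insert j ?low)"
      using low_fin outdeg_le by (intro card_mono) (auto intro: le_less_trans)
    also have "\<dots> \<le> Suc (card ?low)" using low_fin by (simp add: card_insert_if)
    also have "card ?low \<le> outdeg E i" using True fin unfolding outdeg_def by (intro card_mono) auto
    finally show ?thesis using le True by linarith
  next
    case False
    have "{b \<in> ?E' `` {a}. outdeg ?E' b < t} \<subseteq> ?low"
      using False outdeg_le outdeg_j by (auto intro: le_less_trans)
    then show ?thesis using low_fin low_le by (meson card_mono le_trans)
  qed
qed

lemma low_successors_bounded_adversary_run: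
  "finite E \<Longrightarrow> low_successors_bounded E \<Longrightarrow> low_successors_bounded (snd (adversary_run E A))"
  by (induction E A rule: adversary_run.induct)
    (auto simp: low_successors_bounded_insert not_le less_imp_le)

section \<open>Out-balls of the answer graph\<close>

fun out_ball :: "(nat \<times> nat) set \<Rightarrow> nat \<Rightarrow> nat \<Rightarrow> nat set" where
  "out_ball E 0 v = {v}"
| "out_ball E (Suc j) v = out_ball E j v \<union> E `` out_ball E j v"

lemma out_ball_mono: "j \<le> j' \<Longrightarrow> out_ball E j v \<subseteq> out_ball E j' v"
  by (induction j' rule: dec_induct) auto

lemma center_in_out_ball: "v \<in> out_ball E j v"
  using out_ball_mono[of 0 j E v] by auto

lemma out_ball_Suc_eq: "out_ball E (Suc j) v = insert v (E `` out_ball E j v)"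
proof -
  have "out_ball E j v \<subseteq> insert v (E `` out_ball E j v)"
  proof (induction j)
    case (Suc j)
    then show ?case using Image_mono[OF order_refl, of "out_ball E j v" "out_ball E (Suc j) v" E]
      by auto
  qed simp
  then show ?thesis using center_in_out_ball[of v E j] by auto
qed

lemma out_ball_subset: "out_ball E j v \<subseteq> insert v (Range E)"
  by (induction j) auto

lemma finite_out_ball: "finite E \<Longrightarrow> finite (out_ball E j v)"
  using out_ball_subset by (meson finite_Range finite_insert finite_subset)

lemma card_out_ball_le: "finite E \<Longrightarrow> card (out_ball E j v) \<le> card E + 1"
proof -
  assume fin: "finite E"
  have "card (out_ball E j v) \<le> card (insert v (Range E))"
    using fin by (intro card_mono[OF _ out_ball_subset]) (simp add: finite_Range)
  also have "\<dots> \<le> card (Range E) + 1"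
    using fin by (simp add: card_insert_if finite_Range)
  also have "card (Range E) \<le> card E"
    using fin by (simp add: Range_snd card_image_le)
  finally show ?thesis by simp
qed

lemma out_ball_sink: "E `` {v} = {} \<Longrightarrow> out_ball E j v = {v}"
  by (induction j) auto

lemma sum_outdeg_le:
  assumes "finite E"
  shows "(\<Sum>a\<in>S. outdeg E a) \<le> card E"
proof (cases "finite S")
  case True
  have "(\<Sum>a\<in>S. outdeg E a) = card (Sigma S (\<lambda>a. E `` {a}))"
    unfolding outdeg_def using assms True by simp
  also have "\<dots> \<le> card E" using assms by (intro card_mono) auto
  finally show ?thesis .
qed simp

lemma finite_high_outdeg:
  assumes "finite E" "l \<ge> 1"
  shows "finite {y. l \<le> outdeg E y}"
proof (rule finite_subset[OF _ finite_Domain[OF assms(1)]])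
  show "{y. l \<le> outdeg E y} \<subseteq> Domain E"
  proof
    fix y assume "y \<in> {y. l \<le> outdeg E y}"
    then have "E `` {y} \<noteq> {}" using assms(2) by (auto simp: outdeg_def)
    then show "y \<in> Domain E" by blast
  qed
qed

lemma card_high_outdeg_le:
  assumes "finite E" "l \<ge> 1"
  shows "l * card {y. l \<le> outdeg E y} \<le> card E"
proof -
  let ?H = "{y. l \<le> outdeg E y}"
  have "l * card ?H \<le> (\<Sum>a\<in>?H. outdeg E a)"
    using sum_mono[of ?H "\<lambda>_. l" "outdeg E"] by (simp add: mult.commute)
  also have "\<dots> \<le> card E" by (rule sum_outdeg_le[OF assms(1)])
  finally show ?thesis .
qed

lemma card_out_ball_Suc_le:
  assumes fin: "finite E" and bounded: "low_successors_bounded E" and l: "l \<ge> 1"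
  shows "card (out_ball E (Suc j) v) \<le> 2 * l * card (out_ball E j v) + card {y. l \<le> outdeg E y}"
proof -
  let ?B = "out_ball E j v"
  let ?H = "{y. l \<le> outdeg E y}"
  let ?low = "\<lambda>w. {b \<in> E `` {w}. outdeg E b < l}"
  have fin_B: "finite ?B" by (rule finite_out_ball[OF fin])
  have fin_H: "finite ?H" by (rule finite_high_outdeg[OF fin l])
  have "out_ball E (Suc j) v \<subseteq> insert v ((\<Union>w\<in>?B. ?low w) \<union> ?H)"
  proof
    fix y assume "y \<in> out_ball E (Suc j) v"
    then consider "y = v" | w where "w \<in> ?B" "(w, y) \<in> E"
      unfolding out_ball_Suc_eq by blast
    then show "y \<in> insert v ((\<Union>w\<in>?B. ?low w) \<union> ?H)"
    proof cases
      case (2 w)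
      then show ?thesis by (cases "outdeg E y < l") auto
    qed simp
  qed
  then have "card (out_ball E (Suc j) v) \<le> card (insert v ((\<Union>w\<in>?B. ?low w) \<union> ?H))"
    using fin fin_B fin_H by (intro card_mono) (auto intro: finite_subset[of _ "E `` _"])
  also have "\<dots> \<le> Suc (card ((\<Union>w\<in>?B. ?low w) \<union> ?H))" by (rule card_insert_le_m1) simp_all
  also have "card ((\<Union>w\<in>?B. ?low w) \<union> ?H) \<le> card (\<Union>w\<in>?B. ?low w) + card ?H"
    by (rule card_Un_le)
  also have "card (\<Union>w\<in>?B. ?low w) \<le> (\<Sum>w\<in>?B. card (?low w))" by (rule card_UN_le[OF fin_B])
  also have "\<dots> \<le> l * card ?B"
    using bounded sum_mono[of ?B "\<lambda>w. card (?low w)" "\<lambda>_. l"]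
    unfolding low_successors_bounded_def by (simp add: mult.commute)
  finally have "card (out_ball E (Suc j) v) \<le> Suc (l * card ?B + card ?H)" by simp
  moreover have "1 \<le> l * card ?B"
    using l fin_B center_in_out_ball[of v E j] by (auto simp: Suc_le_eq card_gt_0_iff)
  moreover have "2 * l * card ?B = l * card ?B + l * card ?B" by simp
  ultimately show ?thesis by linarith
qed

section \<open>Output elements have large out-balls\<close>

text \<open>\<open>truncated_dist E k e y = min (dist\<^sub>E e y) (k + 1)\<close>.\<close>
definition truncated_dist :: "(nat \<times> nat) set \<Rightarrow> nat \<Rightarrow> nat \<Rightarrow> nat \<Rightarrow> real" where
  "truncated_dist E k e y = real (card {t \<in> {..k}. y \<notin> out_ball E t e})"

lemma truncated_dist_center: "truncated_dist E k e e = 0"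
  by (simp add: truncated_dist_def center_in_out_ball)

lemma in_out_ball_if_truncated_dist_le:
  assumes "truncated_dist E k e y \<le> k"
  shows "y \<in> out_ball E k e"
proof -
  have "{t \<in> {..k}. y \<notin> out_ball E t e} \<noteq> {..k}"
    using assms by (auto simp: truncated_dist_def)
  then obtain t where "t \<le> k" "y \<in> out_ball E t e" by auto
  then show ?thesis using out_ball_mono by blast
qed

lemma edge_consistent_truncated_dist: "edge_consistent E (truncated_dist E k e)"
  unfolding edge_consistent_def
proof (intro ballI, clarify)
  fix i j assume ij: "(i, j) \<in> E"
  let ?far = "\<lambda>y. {t \<in> {..k}. y \<notin> out_ball E t e}"
  have "?far j \<subseteq> insert 0 (Suc ` ?far i)"
  proof
    fix t assume t: "t \<in> ?far j"
    show "t \<in> insert 0 (Suc ` ?far i)"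
    proof (cases t)
      case (Suc s)
      then have "i \<notin> out_ball E s e" using t ij by auto
      then show ?thesis using t Suc by auto
    qed simp
  qed
  then have "card (?far j) \<le> card (insert 0 (Suc ` ?far i))" by (intro card_mono) auto
  also have "\<dots> \<le> Suc (card (Suc ` ?far i))" by (rule card_insert_le_m1) simp_all
  also have "card (Suc ` ?far i) \<le> card (?far i)" by (rule card_image_le) simp
  finally show "truncated_dist E k e j \<le> truncated_dist E k e i + 1"
    unfolding truncated_dist_def by simp
qed

lemma guarantees_out_ball_card:
  assumes guar: "guarantees n A r q k" and fin: "finite E"
    and outputs: "\<And>x. edge_consistent E x \<Longrightarrow> outputs x A L" and e: "e \<in> set L"
  shows "q + 1 \<le> card (out_ball E k e)"
proof -
  let ?x = "truncated_dist E k e"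
  let ?below = "{y \<in> {..<n}. y \<noteq> e \<and> k_greater k (?x e) (?x y)}"
  have "?below \<subseteq> out_ball E k e - {e}"
    using in_out_ball_if_truncated_dist_le truncated_dist_center
    by (auto simp: k_greater_def)
  then have "card ?below \<le> card (out_ball E k e - {e})"
    using fin by (intro card_mono) (simp_all add: finite_out_ball)
  moreover have "q \<le> card ?below"
    using guar outputs[OF edge_consistent_truncated_dist] e unfolding guarantees_def by blast
  moreover have "card (out_ball E k e - {e}) + 1 = card (out_ball E k e)"
    using card.remove[OF finite_out_ball[OF fin] center_in_out_ball, of k e] by simp
  ultimately show ?thesis by linarith
qed

section \<open>Growth of out-balls\<close>

lemma square_le_of_threshold_split:
  fixes P M a g h l :: real
  assumes M: "M \<ge> 1" and P: "P > 0" "P \<le> a" and a: "a \<le> M + 1" "a \<le> 2 * l * g + h"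
    and h: "l * h \<le> M" and l: "2 * M / P < l" "l \<le> 2 * M / P + 1"
  shows "P\<^sup>2 / (16 * M) \<le> g"
proof -
  have lP_gt: "2 * M < l * P" using l(1) P by (simp add: field_simps)
  have "l * P \<le> (2 * M / P + 1) * P" using l(2) P by (intro mult_right_mono) auto
  also have "\<dots> = 2 * M + P" using P by (simp add: field_simps)
  finally have lP_le: "l * P \<le> 4 * M" using P a M by linarith
  have "l * P > 0" using lP_gt M by linarith
  then have l_pos: "l > 0" using P by (simp add: zero_less_mult_iff)
  have "l * h < l * (P / 2)" using h lP_gt by linarith
  then have "h < P / 2" using l_pos by simp
  then have half: "P / 2 < 2 * l * g" using P a by linarith
  then have "l * g > 0" using P by linarith
  then have g_pos: "g > 0" using l_pos by (simp add: zero_less_mult_iff)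
  have "P * P < P * (4 * l * g)" using half P by (intro mult_strict_left_mono) auto
  also have "\<dots> = 4 * g * (l * P)" by (simp add: algebra_simps)
  also have "\<dots> \<le> 4 * g * (4 * M)" using lP_le g_pos by (intro mult_left_mono) auto
  finally have "P\<^sup>2 \<le> 16 * M * g" by (simp add: power2_eq_square algebra_simps)
  then show ?thesis using M by (simp add: divide_le_eq mult.commute)
qed

text \<open>Choosing the threshold \<open>l \<approx> 2M/P\<close> in \<open>card_out_ball_Suc_le\<close> shows that a
  ball can grow by one step from size \<open>g\<close> to size at least \<open>P\<close> only if \<open>g \<ge> P\<^sup>2/(16M)\<close>.\<close>
lemma card_out_ball_square_le:
  assumes fin: "finite E" and bounded: "low_successors_bounded E" and E: "card E \<ge> 1"
    and P: "P > 0" "P \<le> real (card (out_ball E (Suc j) v))"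
  shows "P\<^sup>2 / (16 * real (card E)) \<le> real (card (out_ball E j v))"
proof -
  define M where "M = real (card E)"
  define l where "l = nat \<lfloor>2 * M / P\<rfloor> + 1"
  have M: "M \<ge> 1" using E unfolding M_def by simp
  have l1: "l \<ge> 1" unfolding l_def by simp
  have "2 * M / P \<ge> 0" using M P by simp
  then have l_real: "real l = of_int \<lfloor>2 * M / P\<rfloor> + 1" unfolding l_def by simp
  have lower: "2 * M / P < real l" and upper: "real l \<le> 2 * M / P + 1"
    using l_real real_of_int_floor_add_one_gt[of "2 * M / P"] of_int_floor_le[of "2 * M / P"]
    by linarith+
  have "real (card (out_ball E (Suc j) v)) \<le> M + 1"
    unfolding M_def using of_nat_mono[where 'a=real, OF card_out_ball_le[OF fin, of "Suc j" v]] by simp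
  moreover have "real (card (out_ball E (Suc j) v))
      \<le> 2 * real l * real (card (out_ball E j v)) + real (card {y. l \<le> outdeg E y})"
    using of_nat_mono[where 'a=real, OF card_out_ball_Suc_le[OF fin bounded l1, of j v]] by simp
  moreover have "real l * real (card {y. l \<le> outdeg E y}) \<le> M"
    unfolding M_def using of_nat_mono[where 'a=real, OF card_high_outdeg_le[OF fin l1]] by simp
  ultimately have "P\<^sup>2 / (16 * M) \<le> real (card (out_ball E j v))"
    by (rule square_le_of_threshold_split[OF M P _ _ _ lower upper])
  then show ?thesis unfolding M_def .
qed

lemma card_out_ball_iterated_le:
  assumes fin: "finite E" and bounded: "low_successors_bounded E" and E: "card E \<ge> 1"
    and q: "q > 0" "q \<le> real (card (out_ball E k v))" and i: "i \<le> k"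
  shows "16 * real (card E) * (q / (16 * real (card E))) ^ 2 ^ i \<le> real (card (out_ball E (k - i) v))"
  using i
proof (induction i)
  case 0
  then show ?case using q E by simp
next
  case (Suc i)
  define Y where "Y = 16 * real (card E)"
  have Y: "Y > 0" using E unfolding Y_def by simp
  have "0 < Y * (q / Y) ^ 2 ^ i" using Y q by simp
  moreover have "Y * (q / Y) ^ 2 ^ i \<le> real (card (out_ball E (Suc (k - Suc i)) v))"
    using Suc by (simp add: Y_def Suc_diff_Suc)
  ultimately have "(Y * (q / Y) ^ 2 ^ i)\<^sup>2 / Y \<le> real (card (out_ball E (k - Suc i) v))"
    using card_out_ball_square_le[OF fin bounded E] unfolding Y_def by simp
  moreover have "(Y * (q / Y) ^ 2 ^ i)\<^sup>2 / Y = Y * (q / Y) ^ 2 ^ Suc i"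
    using Y by (simp add: power2_eq_square power_add[symmetric] mult_2)
  ultimately show ?case unfolding Y_def by simp
qed

lemma powr_le_of_iterated_power_le:
  fixes q Y :: real and N :: nat
  assumes N: "N \<ge> 2" and q: "q > 0" and Y: "Y > 0" and le: "Y * (q / Y) ^ N \<le> 1"
  shows "q powr (1 + 1 / (real N - 1)) \<le> Y"
proof -
  have N_pos: "real N - 1 > 0" using N by simp
  have "q ^ N \<le> Y ^ N / Y" using le Y by (simp add: power_divide field_simps)
  also have "\<dots> = Y ^ (N - 1)" using Y N by (simp add: power_diff)
  also have "\<dots> = Y powr (real N - 1)" using Y N by (simp add: powr_realpow[symmetric] of_nat_diff)
  finally have "(q powr real N) powr (1 / (real N - 1)) \<le> (Y powr (real N - 1)) powr (1 / (real N - 1))"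
    using q N_pos by (intro powr_mono2) (auto simp: powr_realpow)
  moreover have "1 + 1 / (real N - 1) = real N * (1 / (real N - 1))"
    using N_pos by (simp add: field_simps)
  ultimately show ?thesis using N_pos Y by (simp add: powr_powr)
qed

lemma mult_root_le_of_iterated_power_le:
  fixes q Y r :: real and N :: nat
  assumes N: "N \<ge> 1" and q: "q > 0" and Y: "Y > 0" and r: "r \<ge> 0"
    and le: "r * (Y * (q / Y) ^ N) \<le> Y"
  shows "q * r powr (1 / real N) \<le> Y"
proof -
  have "r \<le> (Y / q) ^ N" using le q Y by (simp add: power_divide field_simps)
  then have "r powr (1 / real N) \<le> ((Y / q) powr real N) powr (1 / real N)"
    using r q Y by (intro powr_mono2) (auto simp: powr_realpow)
  also have "\<dots> = Y / q" using N q Y by (simp add: powr_powr)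
  finally show ?thesis using q by (simp add: field_simps)
qed

section \<open>Lower bounds on the number of comparisons\<close>

lemma outdeg_pos_if_card_out_ball_gt_1:
  assumes "finite E" "card (out_ball E k v) > 1"
  shows "outdeg E v \<ge> 1"
proof (rule ccontr)
  assume "\<not> outdeg E v \<ge> 1"
  then have "card (E `` {v}) = 0" by (simp add: outdeg_def)
  then have "E `` {v} = {}" using assms(1) by simp
  then show False using assms(2) by (simp add: out_ball_sink)
qed

lemma card_edges_ge_powr:
  assumes fin: "finite E" and bounded: "low_successors_bounded E" and k: "k \<ge> 1"
    and q: "q \<ge> 1" and ball: "q + 1 \<le> card (out_ball E k e)"
  shows "real q powr (1 + 1 / (2 ^ k - 1)) \<le> 16 * real (card E)"
proof -
  have "1 \<le> outdeg E e" using outdeg_pos_if_card_out_ball_gt_1[OF fin, of k e] ball q by simp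
  also have "\<dots> \<le> card E" using sum_outdeg_le[OF fin, of "{e}"] by simp
  finally have E: "card E \<ge> 1" .
  have "16 * real (card E) * (real q / (16 * real (card E))) ^ 2 ^ k \<le> real (card (out_ball E (k - k) e))"
    using ball q by (intro card_out_ball_iterated_le[OF fin bounded E]) auto
  then have "16 * real (card E) * (real q / (16 * real (card E))) ^ 2 ^ k \<le> 1" by simp
  moreover have "(2::nat) ^ k \<ge> 2" using k by (cases k) auto
  ultimately have "real q powr (1 + 1 / (real (2 ^ k) - 1)) \<le> 16 * real (card E)"
    using E q by (intro powr_le_of_iterated_power_le) auto
  then show ?thesis by simp
qed

lemma card_edges_ge_mult_root:
  assumes fin: "finite E" and bounded: "low_successors_bounded E" and k: "k \<ge> 1"
    and q: "q \<ge> 1" and L: "distinct L" "L \<noteq> []"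
    and balls: "\<And>e. e \<in> set L \<Longrightarrow> q + 1 \<le> card (out_ball E k e)"
  shows "real q * real (length L) powr (1 / 2 ^ (k - 1)) \<le> 16 * real (card E)"
proof -
  obtain e0 where "e0 \<in> set L" using L(2) by (cases L) auto
  have "1 \<le> outdeg E e0" using outdeg_pos_if_card_out_ball_gt_1[OF fin, of k e0] balls[OF \<open>e0 \<in> set L\<close>] q by simp
  also have "\<dots> \<le> card E" using sum_outdeg_le[OF fin, of "{e0}"] by simp
  finally have E: "card E \<ge> 1" .
  define Y where "Y = 16 * real (card E)"
  define P where "P = Y * (real q / Y) ^ 2 ^ (k - 1)"
  have P_le_outdeg: "P \<le> 2 * real (outdeg E e)" if e: "e \<in> set L" for e
  proof -
    have "P \<le> real (card (out_ball E (k - (k - 1)) e))"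
      unfolding P_def Y_def using balls[OF e] q
      by (intro card_out_ball_iterated_le[OF fin bounded E]) auto
    also have "card (out_ball E (k - (k - 1)) e) \<le> 1 + outdeg E e"
      using k fin by (simp add: out_ball_Suc_eq outdeg_def card_insert_if)
    finally show ?thesis
      using outdeg_pos_if_card_out_ball_gt_1[OF fin, of k e] balls[OF e] q by simp
  qed
  have "real (length L) * P = (\<Sum>e\<in>set L. P)" using L(1) by (simp add: distinct_card)
  also have "\<dots> \<le> (\<Sum>e\<in>set L. 2 * real (outdeg E e))" by (rule sum_mono) (rule P_le_outdeg)
  also have "\<dots> = 2 * real (\<Sum>e\<in>set L. outdeg E e)" by (simp add: sum_distrib_left)
  also have "\<dots> \<le> Y"
    unfolding Y_def using of_nat_mono[where 'a=real, OF sum_outdeg_le[OF fin, of "set L"]] by simp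
  finally have "real (length L) * P \<le> Y" .
  then have "real q * real (length L) powr (1 / real (2 ^ (k - 1))) \<le> Y"
    unfolding P_def Y_def using E q by (intro mult_root_le_of_iterated_power_le) auto
  then show ?thesis unfolding Y_def by simp
qed

theorem mainTheorem15:
  shows "\<exists>c>0. \<forall>n A m r q k. k \<ge> 1 \<longrightarrow> r \<ge> 1 \<longrightarrow> depth A \<le> m \<longrightarrow>
            guarantees n A r q k \<longrightarrow>
            real m \<ge> c * max (real q powr (1 + 1 / (2 ^ k - 1)))
                               (real q * real r powr (1 / 2 ^ (k - 1)))"
proof (rule exI[of _ "1 / 16"], intro conjI allI impI)
  fix n A m r q k
  assume k: "k \<ge> 1" and r: "r \<ge> 1" and depth: "depth A \<le> m" and guar: "guarantees n A r q k"
  obtain L E where run: "adversary_run {} A = (L, E)" by fastforce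
  have fin: "finite E" and card: "card E \<le> m"
    using adversary_run_card[of "{}" A] run depth by auto
  have bounded: "low_successors_bounded E"
    using low_successors_bounded_adversary_run[of "{}" A] run by (simp add: low_successors_bounded_def)
  have outputs: "outputs x A L" if "edge_consistent E x" for x
    using outputs_adversary_run[of "{}" A x] run that by simp
  have L: "length L = r" "distinct L"
    using guar outputs[of "\<lambda>_. 0"] by (auto simp: guarantees_def edge_consistent_def)
  have balls: "q + 1 \<le> card (out_ball E k e)" if "e \<in> set L" for e
    by (rule guarantees_out_ball_card[OF guar fin outputs that])
  show "real m \<ge> 1 / 16 * max (real q powr (1 + 1 / (2 ^ k - 1))) (real q * real r powr (1 / 2 ^ (k - 1)))"
  proof (cases "q = 0")
    case False
    then have q: "q \<ge> 1" by simp
    have "L \<noteq> []" using L r by auto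
    then obtain e where "e \<in> set L" by (cases L) auto
    have "real (card E) \<le> real m" using card by simp
    then show ?thesis
      using card_edges_ge_powr[OF fin bounded k q balls[OF \<open>e \<in> set L\<close>]]
        card_edges_ge_mult_root[OF fin bounded k q L(2) \<open>L \<noteq> []\<close> balls] L(1)
      by simp
  qed simp
qed simp

end
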